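(* Let $0<\eta<1$, $I=[\eta,1]$, and $\mathcal{D}$ as in the context. For every $1\le p\le\infty$ there are constants $C,C_6>0$ independent of $n$ such that $\varepsilon_n(B_1(\mathcal{D}))_{L^p(I)}\le Ce^{-C_6n^{1/2}}$ for all $n\ge1$.
   Context: Dictionary: for $b\in(0,\infty)$ let $g(x,b)=\frac{\eta+b}{x+b}$ on $I$, and $\mathcal{D}=\{g(\cdot,b):b\in(0,\infty)\}$. $B_1(\mathcal{D})$ is the closure in $L^p(I)$ of $\{\sum_{j=1}^m c_jg_j: m\in\mathbb{N}, g_j\in\mathcal{D}, \sum_j|c_j|\le1\}$. Entropy numbers: $\varepsilon_n(F)_X=\inf\{\varepsilon>0: F\text{ is covered by }2^n\text{ balls of radius }\varepsilon\text{ in }X\}$. *)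

theory Defs
  imports "HOL-Analysis.Analysis" "HOL-Probability.Essential_Supremum"
begin

definition Lp_dist :: "ereal \<Rightarrow> real set \<Rightarrow> (real \<Rightarrow> real) \<Rightarrow> (real \<Rightarrow> real) \<Rightarrow> ereal" where
  "Lp_dist p I f g =
     (if p = \<infinity> then esssup (lebesgue_on I) (\<lambda>x. ereal \<bar>f x - g x\<bar>)
      else (let J = (\<integral>\<^sup>+ x. ennreal (\<bar>f x - g x\<bar> powr real_of_ereal p) \<partial>lebesgue_on I)
            in if J = \<infinity> then \<infinity> else ereal (enn2real J powr (1 / real_of_ereal p))))"

definition in_Lp :: "ereal \<Rightarrow> real set \<Rightarrow> (real \<Rightarrow> real) \<Rightarrow> bool" where
  "in_Lp p I f \<longleftrightarrow> f \<in> borel_measurable (lebesgue_on I) \<and> Lp_dist p I f (\<lambda>_. 0) < \<infinity>"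

definition dict_g :: "real \<Rightarrow> real \<Rightarrow> real \<Rightarrow> real" where
  "dict_g \<eta> b x = (\<eta> + b) / (x + b)"

definition dict_combs :: "real \<Rightarrow> (real \<Rightarrow> real) set" where
  "dict_combs \<eta> = {h. \<exists>(m::nat) (c::nat \<Rightarrow> real) (b::nat \<Rightarrow> real).
       (\<forall>j<m. 0 < b j) \<and> (\<Sum>j<m. \<bar>c j\<bar>) \<le> 1 \<and>
       h = (\<lambda>x. \<Sum>j<m. c j * dict_g \<eta> (b j) x)}"

definition B1 :: "ereal \<Rightarrow> real set \<Rightarrow> real \<Rightarrow> (real \<Rightarrow> real) set" where
  "B1 p I \<eta> = {f. in_Lp p I f \<and>
       (\<forall>e>0. \<exists>h\<in>dict_combs \<eta>. Lp_dist p I f h < ereal e)}"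

definition entropy_number :: "ereal \<Rightarrow> real set \<Rightarrow> (real \<Rightarrow> real) set \<Rightarrow> nat \<Rightarrow> ereal" where
  "entropy_number p I F n = Inf {ereal e | e. e > 0 \<and>
      (\<exists>Cs. finite Cs \<and> card Cs \<le> 2 ^ n \<and> (\<forall>c\<in>Cs. in_Lp p I c) \<and>
            (\<forall>f\<in>F. \<exists>c\<in>Cs. Lp_dist p I f c \<le> ereal e))}"

end

theory Submission
  imports Defs
begin

text \<open>On \<open>I = [\<eta>, 1]\<close> with midpoint \<open>m\<close> and half-width \<open>r\<close>, every dictionary element is a
  geometric series in \<open>\<tau> = (x - m) / r\<close>:
  \<open>(\<eta> + b) / (x + b) = (\<eta> + b) / (m + b) * \<Sum>k. (- r / (m + b))\<^sup>k * \<tau>\<^sup>k\<close>.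
  The coefficients lie in \<open>[-1, 1]\<close> and the tail after \<open>t\<close> terms is at most \<open>q\<^sup>t / (1 - q)\<close>
  with \<open>q = r / m < 1\<close>, uniformly in \<open>b > 0\<close>. Hence every element of \<open>B\<^sub>1\<close> is close in
  \<open>L\<^sup>p\<close> to a polynomial of degree \<open>< t\<close> in \<open>\<tau>\<close> with coefficients in \<open>[-1, 1]\<close>; rounding the
  coefficients to the grid \<open>\<int> / N\<close> yields a net of \<open>(2N + 1)\<^sup>t\<close> polynomials with an extra uniform
  error \<open>t / N\<close>. Taking \<open>N = 4\<^sup>t\<close> and \<open>t = \<lfloor>\<surd>n / 2\<rfloor>\<close>, the net has at most \<open>2\<^sup>n\<close> elements
  and radius \<open>O(max q (1/2)\<^sup>t) = O(exp (- c \<surd>n))\<close>.\<close>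

lemma powr_add_le_two_powr:
  fixes a b P :: real
  assumes "0 \<le> a" "0 \<le> b" "0 \<le> P"
  shows "(a + b) powr P \<le> 2 powr P * (a powr P + b powr P)"
proof -
  have "(a + b) powr P \<le> (2 * max a b) powr P"
    using assms by (intro powr_mono2) auto
  also have "\<dots> = 2 powr P * max a b powr P"
    using assms by (simp add: powr_mult)
  also have "max a b powr P \<le> a powr P + b powr P"
    by (cases "a \<le> b") (auto simp: max_def)
  finally show ?thesis
    by simp
qed

lemma geometric_remainder:
  fixes u :: real
  assumes "1 + u \<noteq> 0"
  shows "1 / (1 + u) - (\<Sum>k<t. (- u) ^ k) = (- u) ^ t / (1 + u)"
proof -
  have "(\<Sum>k<t. (- u) ^ k) = (1 - (- u) ^ t) / (1 + u)"
    using assms by (subst sum_gp_strict) auto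
  then show ?thesis
    using assms by (simp add: diff_divide_distrib)
qed

lemma abs_geometric_remainder_le:
  fixes u q :: real
  assumes "\<bar>u\<bar> \<le> q" "q < 1"
  shows "\<bar>1 / (1 + u) - (\<Sum>k<t. (- u) ^ k)\<bar> \<le> q ^ t / (1 - q)"
proof -
  have u: "1 - q \<le> 1 + u" "0 < 1 + u"
    using assms by auto
  have "\<bar>1 / (1 + u) - (\<Sum>k<t. (- u) ^ k)\<bar> = \<bar>u\<bar> ^ t / (1 + u)"
    using u by (simp add: geometric_remainder power_abs)
  also have "\<dots> \<le> q ^ t / (1 + u)"
    using assms u by (intro divide_right_mono power_mono) auto
  also have "\<dots> \<le> q ^ t / (1 - q)"
    using assms u by (intro divide_left_mono) auto
  finally show ?thesis .
qed

lemma abs_sub_floor_div_le: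
  fixes a :: real
  assumes "0 < N"
  shows "\<bar>a - of_int \<lfloor>a * N\<rfloor> / N\<bar> \<le> 1 / N"
proof -
  have "a - of_int \<lfloor>a * N\<rfloor> / N = (a * N - of_int \<lfloor>a * N\<rfloor>) / N"
    using assms by (simp add: field_simps)
  moreover have "0 \<le> a * N - of_int \<lfloor>a * N\<rfloor>" "a * N - of_int \<lfloor>a * N\<rfloor> \<le> 1"
    by linarith+
  ultimately show ?thesis
    using assms by (simp add: divide_right_mono)
qed

lemma floor_mult_in_range:
  fixes a :: real
  assumes "\<bar>a\<bar> \<le> 1"
  shows "\<lfloor>a * real N\<rfloor> \<in> {- int N..int N}"
proof -
  have "\<bar>a * real N\<bar> \<le> real N"
    using assms by (simp add: abs_mult mult_left_le_one_le)
  then show ?thesis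
    by (simp add: le_floor_iff floor_le_iff abs_le_iff)
qed

lemma abs_poly_sub_quantized_le:
  fixes y :: real
  assumes "0 < N" "\<bar>y\<bar> \<le> 1"
  shows "\<bar>(\<Sum>k<t. a k * y ^ k) - (\<Sum>k<t. of_int \<lfloor>a k * N\<rfloor> / N * y ^ k)\<bar> \<le> t / N"
proof -
  have "\<bar>(\<Sum>k<t. a k * y ^ k) - (\<Sum>k<t. of_int \<lfloor>a k * N\<rfloor> / N * y ^ k)\<bar>
      \<le> (\<Sum>k<t. \<bar>a k - of_int \<lfloor>a k * N\<rfloor> / N\<bar> * \<bar>y\<bar> ^ k)"
    unfolding sum_subtractf[symmetric] left_diff_distrib[symmetric] power_abs[symmetric] abs_mult[symmetric]
    by (rule sum_abs)
  also have "\<dots> \<le> (\<Sum>k<t. 1 / N)"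
  proof (rule sum_mono)
    fix k
    have "\<bar>a k - of_int \<lfloor>a k * N\<rfloor> / N\<bar> * \<bar>y\<bar> ^ k \<le> \<bar>a k - of_int \<lfloor>a k * N\<rfloor> / N\<bar>"
      using assms by (intro mult_right_le_one_le power_le_one) auto
    then show "\<bar>a k - of_int \<lfloor>a k * N\<rfloor> / N\<bar> * \<bar>y\<bar> ^ k \<le> 1 / N"
      using abs_sub_floor_div_le[OF assms(1)] by (rule order_trans)
  qed
  finally show ?thesis
    by simp
qed

lemma net_size_le_two_power:
  fixes n :: nat
  defines "t \<equiv> nat \<lfloor>sqrt n / 2\<rfloor>"
  shows "(2 * 4 ^ t + 1) ^ t \<le> (2::nat) ^ n"
proof -
  have "2 * 4 ^ t + 1 \<le> (2::nat) ^ (2 * t + 2)"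
    by (simp add: power_add power_mult)
  then have "(2 * 4 ^ t + 1) ^ t \<le> ((2::nat) ^ (2 * t + 2)) ^ t"
    by (rule power_mono) simp
  also have "\<dots> = 2 ^ ((2 * t + 2) * t)"
    by (rule power_mult[symmetric])
  also have "\<dots> \<le> 2 ^ n"
  proof (rule power_increasing)
    show "(2 * t + 2) * t \<le> n"
    proof (cases "t = 0")
      case False
      have "2 * real t \<le> sqrt n"
        using of_int_floor_le[of "sqrt n / 2"] by (simp add: t_def)
      then have "(2 * real t) ^ 2 \<le> real n"
        using power_mono[of "2 * real t" "sqrt n" 2] by simp
      then have "real (4 * t * t) \<le> real n"
        by (simp add: power2_eq_square)
      then have "4 * t * t \<le> n"
        by (simp only: of_nat_le_iff)
      moreover have "(2 * t + 2) * t \<le> 4 * t * t"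
        using False by simp
      ultimately show ?thesis
        by linarith
    qed simp
  qed simp
  finally show ?thesis .
qed

lemma real_div_four_power_le: "real t / 4 ^ t \<le> (1 / 2) ^ t"
proof -
  have "real t \<le> 2 ^ t"
    by (metis less_exp less_imp_le of_nat_le_iff of_nat_numeral of_nat_power)
  then have "real t / 4 ^ t \<le> 2 ^ t / (2 ^ t * 2 ^ t)"
    by (simp add: divide_right_mono flip: power_mult_distrib)
  also have "\<dots> = (1 / 2) ^ t"
    by (simp add: power_one_over)
  finally show ?thesis .
qed

lemma covering_radius_le_power:
  fixes q :: real
  assumes "0 < q" "q < 1"
  shows "q ^ t / (1 - q) + t / 4 ^ t \<le> (1 / (1 - q) + 1) * max q (1 / 2) ^ t"
proof -
  have "q ^ t / (1 - q) \<le> max q (1 / 2) ^ t / (1 - q)"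
    using assms by (intro divide_right_mono power_mono) auto
  moreover have "real t / 4 ^ t \<le> max q (1 / 2) ^ t"
    using real_div_four_power_le by (rule order_trans) (intro power_mono, auto)
  ultimately show ?thesis
    by (simp add: algebra_simps)
qed

lemma power_nat_floor_le:
  fixes \<rho> x :: real
  assumes "0 < \<rho>" "\<rho> < 1" "0 \<le> x"
  shows "\<rho> ^ nat \<lfloor>x\<rfloor> \<le> exp (ln \<rho> * x) / \<rho>"
proof -
  have "\<rho> ^ nat \<lfloor>x\<rfloor> = exp (ln \<rho> * real (nat \<lfloor>x\<rfloor>))"
    using assms by (simp only: exp_of_nat2_mult exp_ln)
  also have "\<dots> \<le> exp (ln \<rho> * (x - 1))"
  proof -
    have "x - 1 \<le> real (nat \<lfloor>x\<rfloor>)"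
      using assms by linarith
    then show ?thesis
      using assms by (intro exp_mono mult_left_mono_neg) auto
  qed
  also have "\<dots> = exp (ln \<rho> * x) / \<rho>"
    using assms by (simp add: right_diff_distrib exp_diff)
  finally show ?thesis .
qed

section \<open>\<open>L\<^sup>p\<close> distances and entropy numbers\<close>

lemma Lp_dist_ereal_le_iff:
  assumes "0 < P" "0 \<le> E"
  shows "Lp_dist (ereal P) I f g \<le> ereal E \<longleftrightarrow>
    (\<integral>\<^sup>+ x. ennreal (\<bar>f x - g x\<bar> powr P) \<partial>lebesgue_on I) \<le> ennreal (E powr P)"
proof (cases "(\<integral>\<^sup>+ x. ennreal (\<bar>f x - g x\<bar> powr P) \<partial>lebesgue_on I) = \<infinity>")
  case False
  then obtain j where j: "(\<integral>\<^sup>+ x. ennreal (\<bar>f x - g x\<bar> powr P) \<partial>lebesgue_on I) = ennreal j" "0 \<le> j"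
    by (cases rule: ennreal_cases) auto
  have "j powr (1 / P) \<le> E \<longleftrightarrow> j \<le> E powr P"
  proof
    assume "j powr (1 / P) \<le> E"
    then have "(j powr (1 / P)) powr P \<le> E powr P"
      using assms by (intro powr_mono2) auto
    then show "j \<le> E powr P"
      using assms j by (simp add: powr_powr)
  next
    assume "j \<le> E powr P"
    then have "j powr (1 / P) \<le> (E powr P) powr (1 / P)"
      using assms j by (intro powr_mono2) auto
    then show "j powr (1 / P) \<le> E"
      using assms by (simp add: powr_powr)
  qed
  then show ?thesis
    using j assms by (simp add: Lp_dist_def)
qed (simp add: Lp_dist_def top_unique)

lemma Lp_dist_infinity_le:
  assumes "f \<in> borel_measurable (lebesgue_on I)" "g \<in> borel_measurable (lebesgue_on I)"
    and "AE x in lebesgue_on I. \<bar>f x - g x\<bar> \<le> B"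
  shows "Lp_dist \<infinity> I f g \<le> ereal B"
  unfolding Lp_dist_def using assms by (auto intro!: esssup_I)

lemma AE_less_of_Lp_dist_infinity_less:
  assumes "Lp_dist \<infinity> I f g < ereal E"
  shows "AE x in lebesgue_on I. \<bar>f x - g x\<bar> < E"
  using esssup_AE[of "\<lambda>x. ereal \<bar>f x - g x\<bar>" "lebesgue_on I"]
proof eventually_elim
  case (elim x)
  then show ?case
    using assms order_le_less_trans by (fastforce simp: Lp_dist_def)
qed

lemma Lp_dist_le_of_bound:
  assumes I: "emeasure (lebesgue_on I) I \<le> 1" and p: "1 \<le> p"
    and "f \<in> borel_measurable (lebesgue_on I)" "g \<in> borel_measurable (lebesgue_on I)"
    and B: "0 \<le> B" "\<forall>x\<in>I. \<bar>f x - g x\<bar> \<le> B"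
  shows "Lp_dist p I f g \<le> ereal B"
proof (cases p)
  case (real P)
  have "(\<integral>\<^sup>+ x. ennreal (\<bar>f x - g x\<bar> powr P) \<partial>lebesgue_on I) \<le> (\<integral>\<^sup>+ x. ennreal (B powr P) \<partial>lebesgue_on I)"
    using B p real by (intro nn_integral_mono ennreal_leI powr_mono2) auto
  also have "\<dots> = ennreal (B powr P) * emeasure (lebesgue_on I) I"
    by (simp add: nn_integral_const)
  also have "\<dots> \<le> ennreal (B powr P)"
    using mult_left_mono[OF I] by simp
  finally show ?thesis
    using p B real by (simp add: Lp_dist_ereal_le_iff)
qed (use assms in \<open>auto intro!: Lp_dist_infinity_le\<close>)

lemma nn_integral_powr_perturb:
  assumes M: "emeasure M (space M) \<le> 1" and P: "0 \<le> P" and E: "0 \<le> E"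
    and u: "u \<in> borel_measurable M" and uv: "\<forall>x\<in>space M. \<bar>v x\<bar> \<le> \<bar>u x\<bar> + E"
  shows "(\<integral>\<^sup>+ x. ennreal (\<bar>v x\<bar> powr P) \<partial>M)
    \<le> ennreal (2 powr P) * ((\<integral>\<^sup>+ x. ennreal (\<bar>u x\<bar> powr P) \<partial>M) + ennreal (E powr P))"
proof -
  have "(\<integral>\<^sup>+ x. ennreal (\<bar>v x\<bar> powr P) \<partial>M)
      \<le> (\<integral>\<^sup>+ x. ennreal (2 powr P) * (ennreal (\<bar>u x\<bar> powr P) + ennreal (E powr P)) \<partial>M)"
  proof (rule nn_integral_mono)
    fix x assume "x \<in> space M"
    then have "\<bar>v x\<bar> powr P \<le> (\<bar>u x\<bar> + E) powr P"
      using uv P by (intro powr_mono2) auto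
    also have "\<dots> \<le> 2 powr P * (\<bar>u x\<bar> powr P + E powr P)"
      using E P by (intro powr_add_le_two_powr) auto
    finally show "ennreal (\<bar>v x\<bar> powr P) \<le> ennreal (2 powr P) * (ennreal (\<bar>u x\<bar> powr P) + ennreal (E powr P))"
      by (simp add: ennreal_leI flip: ennreal_mult ennreal_plus)
  qed
  also have "\<dots> = ennreal (2 powr P) * ((\<integral>\<^sup>+ x. ennreal (\<bar>u x\<bar> powr P) \<partial>M) + ennreal (E powr P) * emeasure M (space M))"
    using u by (simp add: nn_integral_cmult nn_integral_add nn_integral_const)
  also have "\<dots> \<le> ennreal (2 powr P) * ((\<integral>\<^sup>+ x. ennreal (\<bar>u x\<bar> powr P) \<partial>M) + ennreal (E powr P))"
    using mult_left_mono[OF M] by (intro mult_left_mono add_left_mono) auto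
  finally show ?thesis .
qed

text \<open>In place of Minkowski's inequality the constant \<open>4\<close> comes from the cruder
  \<open>(a + b)\<^sup>P \<le> 2\<^sup>P (a\<^sup>P + b\<^sup>P)\<close>.\<close>
lemma Lp_dist_perturb:
  assumes I: "emeasure (lebesgue_on I) I \<le> 1" and p: "1 \<le> p" and E: "0 \<le> E"
    and f: "f \<in> borel_measurable (lebesgue_on I)" and h: "h \<in> borel_measurable (lebesgue_on I)"
    and c: "c \<in> borel_measurable (lebesgue_on I)"
    and fh: "Lp_dist p I f h < ereal E" and hc: "\<forall>x\<in>I. \<bar>h x - c x\<bar> \<le> E"
  shows "Lp_dist p I f c \<le> ereal (4 * E)"
proof (cases p)
  case (real P)
  have P: "1 \<le> P"
    using p real by simp
  have "(\<integral>\<^sup>+ x. ennreal (\<bar>f x - h x\<bar> powr P) \<partial>lebesgue_on I) \<le> ennreal (E powr P)"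
    using fh E P real by (simp flip: Lp_dist_ereal_le_iff)
  then have "(\<integral>\<^sup>+ x. ennreal (\<bar>f x - c x\<bar> powr P) \<partial>lebesgue_on I)
      \<le> ennreal (2 powr P) * (ennreal (E powr P) + ennreal (E powr P))"
    using nn_integral_powr_perturb[of "lebesgue_on I" P E "\<lambda>x. f x - h x" "\<lambda>x. f x - c x"] I P E f h hc
    by (fastforce intro: order_trans mult_left_mono add_right_mono)
  also have "\<dots> = ennreal (2 powr P * 2 * E powr P)"
    by (simp add: mult.assoc flip: ennreal_mult ennreal_plus)
  also have "2 powr P * 2 * E powr P \<le> (4 * E) powr P"
  proof -
    have "2 powr P * 2 * E powr P \<le> 2 powr P * 2 powr P * E powr P"
      using P powr_mono[of 1 P 2] by (intro mult_right_mono mult_left_mono) auto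
    also have "\<dots> = (4 * E) powr P"
      using E by (simp add: powr_mult[symmetric])
    finally show ?thesis .
  qed
  finally show ?thesis
    using E P real by (simp add: Lp_dist_ereal_le_iff ennreal_leI order_trans)
next
  case PInf
  have "AE x in lebesgue_on I. \<bar>f x - c x\<bar> \<le> 4 * E"
    using AE_less_of_Lp_dist_infinity_less[OF fh[unfolded PInf]] AE_space
  proof eventually_elim
    case (elim x)
    then show ?case
      using hc E by fastforce
  qed
  then show ?thesis
    using PInf f c by (simp add: Lp_dist_infinity_le)
qed (use p in simp)

lemma in_Lp_of_bounded:
  assumes "emeasure (lebesgue_on I) I \<le> 1" "1 \<le> p" "c \<in> borel_measurable (lebesgue_on I)"
    and "0 \<le> B" "\<forall>x\<in>I. \<bar>c x\<bar> \<le> B"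
  shows "in_Lp p I c"
proof -
  have "Lp_dist p I c (\<lambda>_. 0) \<le> ereal B"
    using assms by (intro Lp_dist_le_of_bound) auto
  then show ?thesis
    using assms(3) by (auto simp: in_Lp_def le_less_trans)
qed

lemma entropy_number_le_of_cover:
  assumes "0 < e" "finite Cs" "card Cs \<le> 2 ^ n" "\<forall>c\<in>Cs. in_Lp p I c"
    and "\<forall>f\<in>F. \<exists>c\<in>Cs. Lp_dist p I f c \<le> ereal e"
  shows "entropy_number p I F n \<le> ereal e"
  unfolding entropy_number_def using assms by (intro Inf_lower) blast

lemma borel_measurable_lebesgue_on_of_lborel:
  "f \<in> borel_measurable lborel \<Longrightarrow> f \<in> borel_measurable (lebesgue_on I)"
  by (intro measurable_restrict_space1) (simp add: measurable_completion)

lemma dict_combs_measurable: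
  assumes "h \<in> dict_combs \<eta>"
  shows "h \<in> borel_measurable (lebesgue_on I)"
proof -
  have "h \<in> borel_measurable lborel"
    using assms unfolding dict_combs_def dict_g_def by auto
  then show ?thesis
    by (rule borel_measurable_lebesgue_on_of_lborel)
qed

lemma entropy_number_B1_le_of_uniform_net:
  assumes I: "emeasure (lebesgue_on I) I \<le> 1" and p: "1 \<le> p" and E: "0 < E"
    and Cs: "finite Cs" "card Cs \<le> 2 ^ n" "\<forall>c\<in>Cs. in_Lp p I c"
    and net: "\<forall>h\<in>dict_combs \<eta>. \<exists>c\<in>Cs. \<forall>x\<in>I. \<bar>h x - c x\<bar> \<le> E"
  shows "entropy_number p I (B1 p I \<eta>) n \<le> ereal (4 * E)"
proof -
  have "\<exists>c\<in>Cs. Lp_dist p I f c \<le> ereal (4 * E)" if f: "f \<in> B1 p I \<eta>" for f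
  proof -
    obtain h where h: "h \<in> dict_combs \<eta>" "Lp_dist p I f h < ereal E"
      using f E unfolding B1_def by blast
    obtain c where c: "c \<in> Cs" "\<forall>x\<in>I. \<bar>h x - c x\<bar> \<le> E"
      using net h(1) by blast
    have "Lp_dist p I f c \<le> ereal (4 * E)"
      using f h c Cs(3) I p E
      by (intro Lp_dist_perturb[of I p E f h c]) (auto simp: B1_def in_Lp_def dict_combs_measurable)
    then show ?thesis
      using c(1) by blast
  qed
  then show ?thesis
    using E Cs by (intro entropy_number_le_of_cover) auto
qed

section \<open>Polynomial approximation of the dictionary\<close>

definition mid :: "real \<Rightarrow> real" where
  "mid \<eta> = (1 + \<eta>) / 2"

definition rad :: "real \<Rightarrow> real" where
  "rad \<eta> = (1 - \<eta>) / 2"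

definition tau :: "real \<Rightarrow> real \<Rightarrow> real" where
  "tau \<eta> x = (x - mid \<eta>) / rad \<eta>"

definition dict_ratio :: "real \<Rightarrow> real" where
  "dict_ratio \<eta> = rad \<eta> / mid \<eta>"

text \<open>Expand \<open>dict_g \<eta> b x = (\<eta> + b) / (mid \<eta> + b) / (1 + u)\<close>, where
  \<open>u = rad \<eta> / (mid \<eta> + b) * tau \<eta> x\<close>, as a geometric series in \<open>u\<close>.\<close>
definition dict_coeff :: "real \<Rightarrow> real \<Rightarrow> nat \<Rightarrow> real" where
  "dict_coeff \<eta> b k = (\<eta> + b) / (mid \<eta> + b) * (- (rad \<eta> / (mid \<eta> + b))) ^ k"

lemma dict_ratio_bounds: "0 < \<eta> \<Longrightarrow> \<eta> < 1 \<Longrightarrow> 0 < dict_ratio \<eta> \<and> dict_ratio \<eta> < 1"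
  by (auto simp: dict_ratio_def rad_def mid_def divide_simps)

lemma abs_tau_le_1: "\<eta> < 1 \<Longrightarrow> x \<in> {\<eta>..1} \<Longrightarrow> \<bar>tau \<eta> x\<bar> \<le> 1"
  by (auto simp: tau_def mid_def rad_def abs_le_iff divide_simps)

lemma abs_dict_coeff_le_1:
  assumes "0 < \<eta>" "\<eta> < 1" "0 < b"
  shows "\<bar>dict_coeff \<eta> b k\<bar> \<le> 1"
proof -
  have s: "0 < rad \<eta>" "rad \<eta> < mid \<eta> + b" "\<eta> + b \<le> mid \<eta> + b"
    using assms by (auto simp: mid_def rad_def field_simps)
  then have "\<bar>(\<eta> + b) / (mid \<eta> + b)\<bar> \<le> 1" "\<bar>rad \<eta> / (mid \<eta> + b)\<bar> \<le> 1"
    using assms by (simp_all add: abs_le_iff divide_simps)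
  then show ?thesis
    unfolding dict_coeff_def abs_mult power_abs abs_minus_cancel
    by (intro mult_le_one power_le_one) auto
qed

lemma dict_g_taylor_error:
  assumes "0 < \<eta>" "\<eta> < 1" "0 < b" "x \<in> {\<eta>..1}"
  shows "\<bar>dict_g \<eta> b x - (\<Sum>k<t. dict_coeff \<eta> b k * tau \<eta> x ^ k)\<bar> \<le> dict_ratio \<eta> ^ t / (1 - dict_ratio \<eta>)"
proof -
  define s where "s = mid \<eta> + b"
  define u where "u = (x - mid \<eta>) / s"
  have s: "0 < s" "0 < rad \<eta>" "0 < \<eta> + b" "\<eta> + b \<le> s" "mid \<eta> \<le> s"
    using assms by (auto simp: s_def mid_def rad_def field_simps)
  have "\<bar>u\<bar> \<le> rad \<eta> / s"
    using assms s by (auto simp: u_def mid_def rad_def abs_le_iff divide_simps)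
  also have "\<dots> \<le> dict_ratio \<eta>"
    using assms s unfolding dict_ratio_def by (intro divide_left_mono) (auto simp: mid_def)
  finally have u: "\<bar>u\<bar> \<le> dict_ratio \<eta>" .
  have g: "dict_g \<eta> b x = (\<eta> + b) / s * (1 / (1 + u))"
  proof -
    have "x + b = s * (1 + u)"
      using s by (simp add: u_def s_def field_simps)
    then show ?thesis
      by (simp add: dict_g_def)
  qed
  have "dict_coeff \<eta> b k * tau \<eta> x ^ k = (\<eta> + b) / s * (- u) ^ k" for k
  proof -
    have "- (rad \<eta> / s) * tau \<eta> x = - u"
      using s by (simp add: u_def tau_def)
    then show ?thesis
      unfolding dict_coeff_def s_def[symmetric] by (simp flip: power_mult_distrib)
  qed
  then have "dict_g \<eta> b x - (\<Sum>k<t. dict_coeff \<eta> b k * tau \<eta> x ^ k)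
      = (\<eta> + b) / s * (1 / (1 + u) - (\<Sum>k<t. (- u) ^ k))"
    by (simp add: g sum_distrib_left right_diff_distrib)
  also have "\<bar>\<dots>\<bar> \<le> 1 * (dict_ratio \<eta> ^ t / (1 - dict_ratio \<eta>))"
    unfolding abs_mult using s u dict_ratio_bounds[OF assms(1,2)]
    by (intro mult_mono abs_geometric_remainder_le) auto
  finally show ?thesis
    by simp
qed

lemma dict_combs_poly_approx:
  assumes "0 < \<eta>" "\<eta> < 1" "h \<in> dict_combs \<eta>"
  shows "\<exists>a. (\<forall>k. \<bar>a k\<bar> \<le> 1) \<and>
    (\<forall>x\<in>{\<eta>..1}. \<bar>h x - (\<Sum>k<t. a k * tau \<eta> x ^ k)\<bar> \<le> dict_ratio \<eta> ^ t / (1 - dict_ratio \<eta>))"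
proof -
  obtain m :: nat and c b :: "nat \<Rightarrow> real" where b: "\<forall>j<m. 0 < b j" and c: "(\<Sum>j<m. \<bar>c j\<bar>) \<le> 1"
    and h: "h = (\<lambda>x. \<Sum>j<m. c j * dict_g \<eta> (b j) x)"
    using assms(3) unfolding dict_combs_def mem_Collect_eq by blast
  define Q where "Q = dict_ratio \<eta> ^ t / (1 - dict_ratio \<eta>)"
  have Q: "0 \<le> Q"
    using dict_ratio_bounds[OF assms(1,2)] by (simp add: Q_def)
  define a where "a k = (\<Sum>j<m. c j * dict_coeff \<eta> (b j) k)" for k
  have "\<bar>a k\<bar> \<le> 1" for k
  proof -
    have "\<bar>a k\<bar> \<le> (\<Sum>j<m. \<bar>c j\<bar> * \<bar>dict_coeff \<eta> (b j) k\<bar>)"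
      unfolding a_def abs_mult[symmetric] by (rule sum_abs)
    also have "\<dots> \<le> (\<Sum>j<m. \<bar>c j\<bar>)"
      using abs_dict_coeff_le_1[OF assms(1,2)] b by (intro sum_mono mult_right_le_one_le) auto
    finally show ?thesis
      using c by simp
  qed
  moreover have "\<bar>h x - (\<Sum>k<t. a k * tau \<eta> x ^ k)\<bar> \<le> Q" if x: "x \<in> {\<eta>..1}" for x
  proof -
    have "h x - (\<Sum>k<t. a k * tau \<eta> x ^ k)
        = (\<Sum>j<m. c j * (dict_g \<eta> (b j) x - (\<Sum>k<t. dict_coeff \<eta> (b j) k * tau \<eta> x ^ k)))"
      unfolding h a_def sum_distrib_right sum_distrib_left right_diff_distrib sum_subtractf
      by (subst sum.swap) (simp add: mult.assoc)
    also have "\<bar>\<dots>\<bar> \<le> (\<Sum>j<m. \<bar>c j\<bar> * Q)"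
    proof (intro order_trans[OF sum_abs] sum_mono)
      fix j assume "j \<in> {..<m}"
      then have "\<bar>dict_g \<eta> (b j) x - (\<Sum>k<t. dict_coeff \<eta> (b j) k * tau \<eta> x ^ k)\<bar> \<le> Q"
        unfolding Q_def using b by (intro dict_g_taylor_error[OF assms(1,2) _ x]) auto
      then show "\<bar>c j * (dict_g \<eta> (b j) x - (\<Sum>k<t. dict_coeff \<eta> (b j) k * tau \<eta> x ^ k))\<bar> \<le> \<bar>c j\<bar> * Q"
        unfolding abs_mult by (rule mult_left_mono) simp
    qed
    also have "\<dots> \<le> Q"
      using c Q by (simp add: mult_left_le_one_le flip: sum_distrib_right)
    finally show ?thesis .
  qed
  ultimately show ?thesis
    unfolding Q_def by blast
qed

definition poly_net :: "real \<Rightarrow> nat \<Rightarrow> nat \<Rightarrow> (real \<Rightarrow> real) set" where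
  "poly_net \<eta> N t =
    (\<lambda>j x. \<Sum>k<t. of_int (j k) / N * tau \<eta> x ^ k) ` (PiE {..<t} (\<lambda>_. {- int N..int N}))"

lemma finite_poly_net: "finite (poly_net \<eta> N t)"
  unfolding poly_net_def by (intro finite_imageI finite_PiE) auto

lemma card_poly_net_le: "card (poly_net \<eta> N t) \<le> (2 * N + 1) ^ t"
proof -
  have "card (poly_net \<eta> N t) \<le> card (PiE {..<t} (\<lambda>_. {- int N..int N}))"
    unfolding poly_net_def by (intro card_image_le finite_PiE) auto
  also have "\<dots> = (2 * N + 1) ^ t"
    by (subst card_PiE) (auto simp: nat_add_distrib nat_mult_distrib)
  finally show ?thesis .
qed

lemma emeasure_lebesgue_on_unit_subinterval:
  "0 \<le> (\<eta>::real) \<Longrightarrow> emeasure (lebesgue_on {\<eta>..1}) {\<eta>..1} \<le> 1"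
  by (simp add: emeasure_restrict_space emeasure_lborel_Icc_eq ennreal_le_1)

lemma poly_net_in_Lp:
  assumes "0 < \<eta>" "\<eta> < 1" "1 \<le> p" "0 < N" "c \<in> poly_net \<eta> N t"
  shows "in_Lp p {\<eta>..1} c"
proof -
  obtain j where j: "j \<in> PiE {..<t} (\<lambda>_. {- int N..int N})"
    and c: "c = (\<lambda>x. \<Sum>k<t. of_int (j k) / N * tau \<eta> x ^ k)"
    using assms(5) unfolding poly_net_def by blast
  have "\<bar>c x\<bar> \<le> real t" if x: "x \<in> {\<eta>..1}" for x
  proof -
    have "\<bar>of_int (j k) / N * tau \<eta> x ^ k\<bar> \<le> 1" if "k < t" for k
    proof -
      have "\<bar>j k\<bar> \<le> int N"
        using j that by (auto simp: PiE_def Pi_def)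
      then have "\<bar>of_int (j k) / real N\<bar> \<le> 1"
        using assms(4) by (simp add: divide_simps)
      then show ?thesis
        using abs_tau_le_1[OF assms(2) x]
        unfolding abs_mult power_abs by (intro mult_le_one power_le_one) auto
    qed
    then have "\<bar>c x\<bar> \<le> (\<Sum>k<t. 1)"
      unfolding c by (intro order_trans[OF sum_abs] sum_mono) auto
    then show ?thesis
      by simp
  qed
  moreover have "c \<in> borel_measurable lborel"
    unfolding c tau_def by auto
  ultimately show ?thesis
    using assms emeasure_lebesgue_on_unit_subinterval[of \<eta>]
    by (intro in_Lp_of_bounded[of _ _ _ "real t"] borel_measurable_lebesgue_on_of_lborel) auto
qed

lemma dict_combs_near_poly_net:
  assumes "0 < \<eta>" "\<eta> < 1" "0 < N" "h \<in> dict_combs \<eta>"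
  shows "\<exists>c\<in>poly_net \<eta> N t. \<forall>x\<in>{\<eta>..1}.
    \<bar>h x - c x\<bar> \<le> dict_ratio \<eta> ^ t / (1 - dict_ratio \<eta>) + t / N"
proof -
  obtain a where a: "\<forall>k. \<bar>a k\<bar> \<le> 1"
    and ha: "\<forall>x\<in>{\<eta>..1}. \<bar>h x - (\<Sum>k<t. a k * tau \<eta> x ^ k)\<bar> \<le> dict_ratio \<eta> ^ t / (1 - dict_ratio \<eta>)"
    using dict_combs_poly_approx[OF assms(1,2,4)] by blast
  define j where "j = restrict (\<lambda>k. \<lfloor>a k * real N\<rfloor>) {..<t}"
  define c where "c x = (\<Sum>k<t. of_int (j k) / N * tau \<eta> x ^ k)" for x
  have "j \<in> PiE {..<t} (\<lambda>_. {- int N..int N})"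
    unfolding j_def using a floor_mult_in_range by (simp only: restrict_PiE_iff) blast
  then have "c \<in> poly_net \<eta> N t"
    unfolding poly_net_def c_def[abs_def] by (rule imageI)
  moreover have "\<bar>h x - c x\<bar> \<le> dict_ratio \<eta> ^ t / (1 - dict_ratio \<eta>) + t / N" if x: "x \<in> {\<eta>..1}" for x
  proof -
    have "c x = (\<Sum>k<t. of_int \<lfloor>a k * N\<rfloor> / N * tau \<eta> x ^ k)"
      unfolding c_def j_def by simp
    then have "\<bar>(\<Sum>k<t. a k * tau \<eta> x ^ k) - c x\<bar> \<le> t / N"
      using abs_poly_sub_quantized_le[of N "tau \<eta> x"] assms(3) abs_tau_le_1[OF assms(2) x] by simp
    then show ?thesis
      using ha x by fastforce
  qed
  ultimately show ?thesis
    by blast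
qed

lemma entropy_number_B1_le:
  fixes N t n :: nat
  assumes "0 < \<eta>" "\<eta> < 1" "1 \<le> p" "0 < N" "(2 * N + 1) ^ t \<le> 2 ^ n"
  shows "entropy_number p {\<eta>..1} (B1 p {\<eta>..1} \<eta>) n
    \<le> ereal (4 * (dict_ratio \<eta> ^ t / (1 - dict_ratio \<eta>) + t / N))"
proof (rule entropy_number_B1_le_of_uniform_net)
  show "0 < dict_ratio \<eta> ^ t / (1 - dict_ratio \<eta>) + t / N"
    using dict_ratio_bounds[OF assms(1,2)] by (intro add_pos_nonneg) auto
  show "card (poly_net \<eta> N t) \<le> 2 ^ n"
    using card_poly_net_le assms(5) by (rule order_trans)
  show "\<forall>c\<in>poly_net \<eta> N t. in_Lp p {\<eta>..1} c"
    using assms poly_net_in_Lp by blast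
  show "\<forall>h\<in>dict_combs \<eta>. \<exists>c\<in>poly_net \<eta> N t. \<forall>x\<in>{\<eta>..1}.
      \<bar>h x - c x\<bar> \<le> dict_ratio \<eta> ^ t / (1 - dict_ratio \<eta>) + t / N"
    using assms dict_combs_near_poly_net by blast
qed (use assms finite_poly_net emeasure_lebesgue_on_unit_subinterval[of \<eta>] in simp_all)

lemma entropy_number_B1_le_power:
  assumes "0 < \<eta>" "\<eta> < 1" "1 \<le> p"
  shows "entropy_number p {\<eta>..1} (B1 p {\<eta>..1} \<eta>) n
    \<le> ereal (4 * (1 / (1 - dict_ratio \<eta>) + 1) * max (dict_ratio \<eta>) (1 / 2) ^ nat \<lfloor>sqrt n / 2\<rfloor>)"
proof -
  define q where "q = dict_ratio \<eta>"
  define t where "t = nat \<lfloor>sqrt n / 2\<rfloor>"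
  have q: "0 < q" "q < 1"
    using dict_ratio_bounds[OF assms(1,2)] by (auto simp: q_def)
  have "entropy_number p {\<eta>..1} (B1 p {\<eta>..1} \<eta>) n \<le> ereal (4 * (q ^ t / (1 - q) + t / 4 ^ t))"
    using entropy_number_B1_le[OF assms, of "4 ^ t" t n] net_size_le_two_power[of n]
    by (simp add: q_def t_def)
  also have "\<dots> \<le> ereal (4 * ((1 / (1 - q) + 1) * max q (1 / 2) ^ t))"
    using covering_radius_le_power[OF q, of t] by simp
  finally show ?thesis
    by (simp only: q_def t_def mult.assoc)
qed

theorem corollary4p8:
  fixes \<eta> :: real and p :: ereal
  assumes "0 < \<eta>" and "\<eta> < 1" and "1 \<le> p"
  shows "\<exists>C C6::real. C > 0 \<and> C6 > 0 \<and>
           (\<forall>n::nat. n \<ge> 1 \<longrightarrow>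
              entropy_number p {\<eta>..1} (B1 p {\<eta>..1} \<eta>) n \<le> ereal (C * exp (- C6 * sqrt (real n))))"
proof -
  define \<rho> where "\<rho> = max (dict_ratio \<eta>) (1 / 2)"
  define K where "K = 4 * (1 / (1 - dict_ratio \<eta>) + 1)"
  have \<rho>: "0 < \<rho>" "\<rho> < 1"
    using dict_ratio_bounds[OF assms(1,2)] by (auto simp: \<rho>_def)
  have K: "0 < K"
    using dict_ratio_bounds[OF assms(1,2)] unfolding K_def by (intro mult_pos_pos add_pos_pos) auto
  have "entropy_number p {\<eta>..1} (B1 p {\<eta>..1} \<eta>) n \<le> ereal (K / \<rho> * exp (- (- ln \<rho> / 2) * sqrt n))"
    for n
  proof -
    have "entropy_number p {\<eta>..1} (B1 p {\<eta>..1} \<eta>) n \<le> ereal (K * \<rho> ^ nat \<lfloor>sqrt n / 2\<rfloor>)"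
      using entropy_number_B1_le_power[OF assms, of n] by (simp only: K_def \<rho>_def)
    also have "\<dots> \<le> ereal (K * (exp (ln \<rho> * (sqrt n / 2)) / \<rho>))"
      unfolding ereal_less_eq using \<rho> K by (intro mult_left_mono power_nat_floor_le) auto
    also have "\<dots> = ereal (K / \<rho> * exp (- (- ln \<rho> / 2) * sqrt n))"
      by simp
    finally show ?thesis .
  qed
  moreover have "0 < K / \<rho>" "0 < - ln \<rho> / 2"
    using \<rho> K by simp_all
  ultimately show ?thesis
    by blast
qed

end
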